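(* Let $(a,b,c)\in\mathbb{R}^3\setminus\{(0,0,0)\}$, $A_1=(a,b,c)$, $A_2=(-ae^{c},-be^{-c},-c)$, and let $N(x,y,z)=e^{z}(x+ae^{c})(x-a)+e^{-z}(y+be^{-c})(y-b)+4\sinh\frac{z+c}{2}\sinh\frac{z-c}{2}$, so that the translation-like Thaloid of $\overline{A_1A_2}$ together with $A_1,A_2$ is the zero set $\{N=0\}$. Then for no $R>0$ does $\{N=0\}$ coincide with the translation sphere $S^t_O(R)=\Big\{(x,y,z):\big(\tfrac{xz}{1-e^{-z}}\big)^2+\big(\tfrac{yz}{e^{z}-1}\big)^2+z^2=R^2\Big\}$ (where $\tfrac{z}{1-e^{-z}}$ and $\tfrac{z}{e^z-1}$ are interpreted as $1$ at $z=0$) centered at the origin; in particular the Thaloid is never the translation sphere of radius equal to the translation distance from the origin to $A_1$.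
   Context: $\mathbf{Sol}$ is $\mathbb{R}^3$ with coordinates $(x,y,z)$, group law $(a,b,c)(x,y,z)=(x+ae^{-z},\,y+be^{z},\,z+c)$, and left-invariant metric $ds^2=e^{2z}dx^2+e^{-2z}dy^2+dz^2$. The translation curve starting at the origin with initial unit vector $(u,v,w)$ is $t\mapsto\big(-\tfrac{u}{w}(e^{-wt}-1),\tfrac{v}{w}(e^{wt}-1),wt\big)$ if $w\neq0$ and $t\mapsto(ut,vt,0)$ if $w=0$; the translation distance from the origin to a point is the parameter length $t$ of this curve reaching it, and $S^t_O(R)$ is the set of points at translation distance $R$ from the origin. For $P=(p_1,p_2,p_3)$ let $T_P(X,Y,Z)=(p_1+Xe^{-p_3},\,p_2+Ye^{p_3},\,p_3+Z)$; the translation curve from $P$ to $Q$ is the $T_P$-image of the translation curve from the origin to $T_P^{-1}(Q)$. The translation-like Thaloid of $\overline{A_1A_2}$ is the set of points $P\notin\{A_1,A_2\}$ at which the initial tangent vectors of the translation curves from $P$ to $A_1$ and to $A_2$ are orthogonal with respect to the metric at $P$. *)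

theory Defs
  imports Complex_Main
begin

text \<open>Points of Sol are triples (x, y, z) :: real \<times> real \<times> real.\<close>

definition thaloidN :: "real \<Rightarrow> real \<Rightarrow> real \<Rightarrow> real \<Rightarrow> real \<Rightarrow> real \<Rightarrow> real" where
  "thaloidN a b c x y z =
     exp z * (x + a * exp c) * (x - a) + exp (- z) * (y + b * exp (- c)) * (y - b)
     + 4 * sinh ((z + c) / 2) * sinh ((z - c) / 2)"

definition phi1 :: "real \<Rightarrow> real" where
  "phi1 z = (if z = 0 then 1 else z / (1 - exp (- z)))"

definition phi2 :: "real \<Rightarrow> real" where
  "phi2 z = (if z = 0 then 1 else z / (exp z - 1))"

definition transl_sphere :: "real \<Rightarrow> (real \<times> real \<times> real) set" where
  "transl_sphere R = {(x, y, z). (x * phi1 z)\<^sup>2 + (y * phi2 z)\<^sup>2 + z\<^sup>2 = R\<^sup>2}"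

end

theory Submission
  imports Defs
begin

text \<open>If the zero set of \<open>N\<close> were a translation sphere, it would contain the six points
  \<open>(\<plusminus>R,0,0)\<close>, \<open>(0,\<plusminus>R,0)\<close>, \<open>(0,0,\<plusminus>R)\<close>. For \<open>c \<noteq> 0\<close> the pairs on the \<open>x\<close>- and
  \<open>y\<close>-axes force \<open>a = b = 0\<close>; then \<open>A\<^sub>1 = (0,0,c)\<close> gives \<open>c\<^sup>2 = R\<^sup>2\<close> while \<open>(R,0,0)\<close> gives
  \<open>R\<^sup>2 = 4 sinh\<^sup>2(c/2)\<close>, impossible since \<open>|t| < |sinh t|\<close> for \<open>t \<noteq> 0\<close>. For \<open>c = 0\<close> the point
  \<open>(R,0,0)\<close> gives \<open>R\<^sup>2 = a\<^sup>2 + b\<^sup>2\<close>, and the two points on the \<open>z\<close>-axis then give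
  \<open>(2 - R\<^sup>2) cosh R = 2\<close>, impossible since \<open>(2 - t\<^sup>2) cosh t < 2\<close> for \<open>t > 0\<close>. The argument does not
  need \<open>(a,b,c) \<noteq> 0\<close>.\<close>

lemma sinh_real_gt_self:
  fixes t :: real assumes "t > 0" shows "t < sinh t"
proof -
  have "(\<lambda>s. sinh s - s) 0 < (\<lambda>s. sinh s - s) t"
  proof (rule DERIV_pos_imp_increasing_open[OF assms])
    fix s :: real assume "0 < s"
    have "DERIV (\<lambda>s. sinh s - s) s :> cosh s - 1"
      by (auto intro!: derivative_eq_intros)
    moreover have "cosh s - 1 > 0"
      using \<open>0 < s\<close> cosh_real_ge_1[of s] cosh_real_one_iff[of s] by linarith
    ultimately show "\<exists>y. DERIV (\<lambda>s. sinh s - s) s :> y \<and> y > 0" by blast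
  qed (intro continuous_intros)
  thus ?thesis by simp
qed

lemma square_less_sinh_square_real:
  fixes t :: real assumes "t \<noteq> 0" shows "t\<^sup>2 < (sinh t)\<^sup>2"
proof -
  have "\<bar>t\<bar> < sinh \<bar>t\<bar>" using assms by (intro sinh_real_gt_self) simp
  hence "\<bar>t\<bar>\<^sup>2 < (sinh \<bar>t\<bar>)\<^sup>2" by (intro power_strict_mono) auto
  thus ?thesis by simp
qed

lemma sinh_real_less_mult_cosh:
  fixes t :: real assumes "t > 0" shows "sinh t < t * cosh t"
proof -
  have "(\<lambda>s. s * cosh s - sinh s) 0 < (\<lambda>s. s * cosh s - sinh s) t"
  proof (rule DERIV_pos_imp_increasing_open[OF assms])
    fix s :: real assume "0 < s"
    have "DERIV (\<lambda>s. s * cosh s - sinh s) s :> 1 * cosh s + s * sinh s - cosh s"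
      by (auto intro!: derivative_eq_intros)
    moreover have "1 * cosh s + s * sinh s - cosh s > 0" using \<open>0 < s\<close> by simp
    ultimately show "\<exists>y. DERIV (\<lambda>s. s * cosh s - sinh s) s :> y \<and> y > 0" by blast
  qed (intro continuous_intros)
  thus ?thesis by simp
qed

lemma two_minus_square_mult_cosh_less:
  fixes t :: real assumes "t > 0" shows "(2 - t\<^sup>2) * cosh t < 2"
proof (cases "t\<^sup>2 < 2")
  case True
  have "(\<lambda>s. (2 - s\<^sup>2) * cosh s) t < (\<lambda>s. (2 - s\<^sup>2) * cosh s) 0"
  proof (rule DERIV_neg_imp_decreasing_open[OF assms])
    fix s :: real assume s: "0 < s" "s < t"
    have "DERIV (\<lambda>s. (2 - s\<^sup>2) * cosh s) s :> (0 - 2 * s ^ 1 * 1) * cosh s + (2 - s\<^sup>2) * sinh s"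
      by (auto intro!: derivative_eq_intros)
    moreover have "(0 - 2 * s ^ 1 * 1) * cosh s + (2 - s\<^sup>2) * sinh s < 0"
    proof -
      have "s\<^sup>2 < t\<^sup>2" using s by (intro power_strict_mono) auto
      hence "(2 - s\<^sup>2) * sinh s < (2 - s\<^sup>2) * (s * cosh s)"
        using True sinh_real_less_mult_cosh[OF s(1)] by simp
      also have "\<dots> \<le> 2 * s * cosh s" using s by (simp add: algebra_simps)
      finally show ?thesis by simp
    qed
    ultimately show "\<exists>y. DERIV (\<lambda>s. (2 - s\<^sup>2) * cosh s) s :> y \<and> y < 0" by blast
  qed (intro continuous_intros)
  thus ?thesis by simp
next
  case False
  hence "(2 - t\<^sup>2) * cosh t \<le> 0" by (intro mult_nonpos_nonneg) auto
  thus ?thesis by simp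
qed

lemma mem_transl_sphere_z_zero: "(x, y, 0) \<in> transl_sphere R \<longleftrightarrow> x\<^sup>2 + y\<^sup>2 = R\<^sup>2"
  by (simp add: transl_sphere_def phi1_def phi2_def)

lemma mem_transl_sphere_z_axis: "(0, 0, z) \<in> transl_sphere R \<longleftrightarrow> z\<^sup>2 = R\<^sup>2"
  by (simp add: transl_sphere_def)

lemma thaloidN_at_A1: "thaloidN a b c a b c = 0"
  by (simp add: thaloidN_def)

lemma thaloidN_x_axis_diff:
  "thaloidN a b c x 0 0 - thaloidN a b c (- x) 0 0 = 2 * x * a * (exp c - 1)"
  by (simp add: thaloidN_def algebra_simps)

lemma thaloidN_y_axis_diff:
  "thaloidN a b c 0 y 0 - thaloidN a b c 0 (- y) 0 = 2 * y * b * (exp (- c) - 1)"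
  by (simp add: thaloidN_def algebra_simps)

lemma thaloidN_ab_zero_x_axis:
  "thaloidN 0 0 c x 0 0 = x\<^sup>2 - (2 * sinh (c / 2))\<^sup>2"
  by (simp add: thaloidN_def power2_eq_square)

lemma thaloidN_c_zero_x_axis: "thaloidN a b 0 x 0 0 = x\<^sup>2 - (a\<^sup>2 + b\<^sup>2)"
  by (simp add: thaloidN_def power2_eq_square algebra_simps)

lemma thaloidN_c_zero_z_axis_sum:
  "thaloidN a b 0 0 0 z + thaloidN a b 0 0 0 (- z) = 2 * ((2 - (a\<^sup>2 + b\<^sup>2)) * cosh z - 2)"
proof -
  have "sinh (z / 2) * sinh (z / 2) = (exp z + exp (- z) - 2) / 4"
    using cosh_double[of "z / 2"] cosh_square_eq[of "z / 2"]
    by (simp add: cosh_def power2_eq_square algebra_simps)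
  thus ?thesis by (simp add: thaloidN_def cosh_def power2_eq_square field_simps)
qed

theorem lemma4p2:
  fixes a b c R :: real
  assumes "(a, b, c) \<noteq> (0, 0, 0)" and "R > 0"
  shows "{(x, y, z). thaloidN a b c x y z = 0} \<noteq> transl_sphere R"
proof
  assume "{(x, y, z). thaloidN a b c x y z = 0} = transl_sphere R"
  hence zero_iff: "thaloidN a b c x y z = 0 \<longleftrightarrow> (x, y, z) \<in> transl_sphere R" for x y z
    by (metis (mono_tags) case_prodI mem_Collect_eq case_prodD)
  have axes: "thaloidN a b c R 0 0 = 0" "thaloidN a b c (- R) 0 0 = 0"
    "thaloidN a b c 0 R 0 = 0" "thaloidN a b c 0 (- R) 0 = 0"
    "thaloidN a b c 0 0 R = 0" "thaloidN a b c 0 0 (- R) = 0"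
    by (simp_all add: zero_iff mem_transl_sphere_z_zero mem_transl_sphere_z_axis)
  show False
  proof (cases "c = 0")
    case False
    have "a = 0" using thaloidN_x_axis_diff[of a b c R] axes \<open>R > 0\<close> False by simp
    moreover have "b = 0" using thaloidN_y_axis_diff[of a b c R] axes \<open>R > 0\<close> False by simp
    ultimately have "(0, 0, c) \<in> transl_sphere R"
      using zero_iff[of a b c] thaloidN_at_A1[of a b c] by simp
    hence "c\<^sup>2 = R\<^sup>2" by (simp only: mem_transl_sphere_z_axis)
    moreover have "R\<^sup>2 = (2 * sinh (c / 2))\<^sup>2"
      using axes(1) thaloidN_ab_zero_x_axis[of c R] \<open>a = 0\<close> \<open>b = 0\<close> by simp
    moreover have "(c / 2)\<^sup>2 < (sinh (c / 2))\<^sup>2"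
      using False by (intro square_less_sinh_square_real) simp
    ultimately show False by (simp add: power2_eq_square)
  next
    case True
    have "R\<^sup>2 = a\<^sup>2 + b\<^sup>2" using axes(1) thaloidN_c_zero_x_axis[of a b R] True by simp
    hence "(2 - R\<^sup>2) * cosh R = 2"
      using axes(5,6) thaloidN_c_zero_z_axis_sum[of a b R] True by (simp add: mult.commute)
    thus False using two_minus_square_mult_cosh_less[OF \<open>R > 0\<close>] by simp
  qed
qed

end
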